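(* Let $N\ge 2$ and let $H_N$ act on $\mathbb{C}^N$ as in the context. For every $g\in H_N$ and every $x\in\mathbb{C}^N$, $B^H(g\cdot x)=B^H(x)$.
   Context: Let $\zeta=e^{2\pi i/N}$; indices are modulo $N$. $H_N=\{(k,n,m):k,n,m\in\mathbb{Z}_N\}$ with multiplication $(k,n,m)\cdot(k',n',m')=(k+k',n+n',m+m'+kn')$, acting on $\mathbb{C}^N$ through the operators $(T_kx)_j=x_{j+k}$, $(M_nx)_j=\zeta^{nj}x_j$, $(Z_mx)_j=\zeta^m x_j$; the image of $H_N$ is the group generated by these operators. The discrete Fourier transform of $u\in\mathbb{C}^N$ is $\hat u[k]=\sum_{j=0}^{N-1}u_j\zeta^{-jk}$. For $x\in\mathbb{C}^N$ let $y=(|x_0|^2,\dots,|x_{N-1}|^2)\in\mathbb{R}^N$ and $z=(|\hat x[0]|^2,\dots,|\hat x[N-1]|^2)\in\mathbb{R}^N$. Define $B^M(x)(i,j)=\hat y[i]\hat y[j]\hat y[N-i-j]$ and $B^{FM}(x)(i,j)=\hat z[i]\hat z[j]\hat z[N-i-j]$ for $i,j\in\mathbb{Z}_N$, and the Heisenberg bispectrum $B^H(x)=(B^M(x),B^{FM}(x))$. *)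

theory Defs
  imports "HOL-Analysis.Analysis"
begin

text \<open>Vectors in C^N are modelled as functions nat => complex; only the
  entries at indices j < N are relevant. Indices are taken modulo N.\<close>

definition zeta :: "nat \<Rightarrow> complex" where
  "zeta N = cis (2 * pi / real N)"

definition transl :: "nat \<Rightarrow> nat \<Rightarrow> (nat \<Rightarrow> complex) \<Rightarrow> (nat \<Rightarrow> complex)" where
  "transl N k x = (\<lambda>j. x ((j + k) mod N))"

definition modul :: "nat \<Rightarrow> nat \<Rightarrow> (nat \<Rightarrow> complex) \<Rightarrow> (nat \<Rightarrow> complex)" where
  "modul N n x = (\<lambda>j. zeta N ^ (n * j) * x j)"

definition phase :: "nat \<Rightarrow> nat \<Rightarrow> (nat \<Rightarrow> complex) \<Rightarrow> (nat \<Rightarrow> complex)" where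
  "phase N m x = (\<lambda>j. zeta N ^ m * x j)"

text \<open>The image of H_N: the group of operators generated by T_k, M_n, Z_m
  (all of finite order, so the generated monoid is the generated group).\<close>
inductive_set heis_ops :: "nat \<Rightarrow> ((nat \<Rightarrow> complex) \<Rightarrow> (nat \<Rightarrow> complex)) set"
  for N :: nat where
  id_op: "id \<in> heis_ops N"
| T_op: "g \<in> heis_ops N \<Longrightarrow> transl N k \<circ> g \<in> heis_ops N"
| M_op: "g \<in> heis_ops N \<Longrightarrow> modul N n \<circ> g \<in> heis_ops N"
| Z_op: "g \<in> heis_ops N \<Longrightarrow> phase N m \<circ> g \<in> heis_ops N"

definition dft :: "nat \<Rightarrow> (nat \<Rightarrow> complex) \<Rightarrow> nat \<Rightarrow> complex" where
  "dft N u k = (\<Sum>j<N. u j * inverse (zeta N) ^ (j * k))"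

definition sqmod :: "(nat \<Rightarrow> complex) \<Rightarrow> nat \<Rightarrow> complex" where
  "sqmod x = (\<lambda>j. complex_of_real ((cmod (x j))\<^sup>2))"

definition bisp :: "nat \<Rightarrow> (nat \<Rightarrow> complex) \<Rightarrow> nat \<Rightarrow> nat \<Rightarrow> complex" where
  "bisp N y i j = dft N y i * dft N y j * dft N y ((2 * N - i - j) mod N)"

definition BM :: "nat \<Rightarrow> (nat \<Rightarrow> complex) \<Rightarrow> nat \<Rightarrow> nat \<Rightarrow> complex" where
  "BM N x = bisp N (sqmod x)"

definition BFM :: "nat \<Rightarrow> (nat \<Rightarrow> complex) \<Rightarrow> nat \<Rightarrow> nat \<Rightarrow> complex" where
  "BFM N x = bisp N (sqmod (dft N x))"

end

theory Submission
  imports Defs "HOL-Number_Theory.Cong"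
begin

text \<open>Every generator acts on the power spectra y = |x|^2 and z = |x-hat|^2 either
  trivially or by a cyclic rotation: T_k rotates y and multiplies x-hat by the unimodular
  character zeta^(k i); M_n leaves y unchanged and rotates x-hat by -n; Z_m multiplies x and
  x-hat by a unimodular constant. A bispectrum is invariant under cyclic rotations: rotating
  u by k multiplies u-hat[i] by zeta^(k i), and the three phases in
  u-hat[i] u-hat[j] u-hat[-i-j] multiply to a power of zeta^N = 1.\<close>

lemma power_cong_root_of_unity:
  fixes z :: "'a :: monoid_mult"
  assumes "z ^ N = 1" and "[a = b] (mod N)"
  shows "z ^ a = z ^ b"
proof -
  have "z ^ c = z ^ (c mod N)" for c
  proof -
    have "z ^ c = z ^ (N * (c div N) + c mod N)" by simp
    also have "\<dots> = (z ^ N) ^ (c div N) * z ^ (c mod N)" by (simp only: power_add power_mult)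
    finally show ?thesis using assms(1) by simp
  qed
  then show ?thesis using assms(2) unfolding cong_def by metis
qed

lemma zeta_power_N: "N > 0 \<Longrightarrow> zeta N ^ N = 1"
proof -
  assume "N > 0"
  have "zeta N ^ N = cis (real N * (2 * pi / real N))"
    unfolding zeta_def by (rule Complex.DeMoivre)
  then show ?thesis using \<open>N > 0\<close> by simp
qed

lemma inverse_zeta_power_N: "N > 0 \<Longrightarrow> inverse (zeta N) ^ N = 1"
  by (simp add: power_inverse zeta_power_N)

lemma zeta_nonzero [simp]: "zeta N \<noteq> 0"
  unfolding zeta_def by simp

lemma norm_zeta_power [simp]: "norm (zeta N ^ a) = 1"
  unfolding zeta_def by (simp add: norm_power)

lemma mod_add_mod_complement:
  fixes l k N :: nat
  assumes "l < N"
  shows "(l + k + (N - k mod N)) mod N = l"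
proof -
  have "k mod N < N" using assms by simp
  then have "l + k + (N - k mod N) = l + N + k div N * N"
    using div_mult_mod_eq[of k N] by linarith
  then show ?thesis using assms by simp
qed

lemma sum_rotate_mod:
  fixes f :: "nat \<Rightarrow> 'a :: comm_monoid_add"
  assumes "N > 0"
  shows "(\<Sum>j<N. f ((j + k) mod N)) = (\<Sum>j<N. f j)"
proof (rule sum.reindex_bij_witness[where i = "\<lambda>l. (l + (N - k mod N)) mod N"
                                          and j = "\<lambda>j. (j + k) mod N"])
  fix j assume "j \<in> {..<N}"
  have "((j + k) mod N + (N - k mod N)) mod N = (j + k + (N - k mod N)) mod N"
    by (rule mod_add_left_eq)
  also have "\<dots> = j" using \<open>j \<in> {..<N}\<close> by (metis lessThan_iff mod_add_mod_complement)
  finally show "((j + k) mod N + (N - k mod N)) mod N = j" .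
next
  fix l assume "l \<in> {..<N}"
  have "((l + (N - k mod N)) mod N + k) mod N = (l + (N - k mod N) + k) mod N"
    by (rule mod_add_left_eq)
  also have "l + (N - k mod N) + k = l + k + (N - k mod N)"
    by (simp only: ac_simps)
  also have "(l + k + (N - k mod N)) mod N = l"
    using \<open>l \<in> {..<N}\<close> by (metis lessThan_iff mod_add_mod_complement)
  finally show "((l + (N - k mod N)) mod N + k) mod N = l" .
qed (use assms in auto)

lemma dft_rotate:
  assumes "N > 0"
  shows "dft N (\<lambda>j. y ((j + k) mod N)) = (\<lambda>i. zeta N ^ (k * i) * dft N y i)"
proof
  fix i
  let ?w = "inverse (zeta N)"
  have twiddle: "?w ^ (j * i) = zeta N ^ (k * i) * ?w ^ (((j + k) mod N) * i)" for j
  proof -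
    have "[(j + k) * i = ((j + k) mod N) * i] (mod N)"
      by (simp add: cong_def mod_mult_left_eq)
    then have "?w ^ (((j + k) mod N) * i) = ?w ^ (j * i) * ?w ^ (k * i)"
      using power_cong_root_of_unity[OF inverse_zeta_power_N[OF assms]]
      by (metis add_mult_distrib power_add)
    then show ?thesis by (simp add: power_inverse)
  qed
  have "dft N (\<lambda>j. y ((j + k) mod N)) i
      = zeta N ^ (k * i) * (\<Sum>j<N. y ((j + k) mod N) * ?w ^ (((j + k) mod N) * i))"
    unfolding dft_def sum_distrib_left
    by (intro sum.cong refl) (metis twiddle mult.left_commute)
  also have "\<dots> = zeta N ^ (k * i) * dft N y i"
    unfolding dft_def using sum_rotate_mod[OF assms, of "\<lambda>l. y l * ?w ^ (l * i)"] by simp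
  finally show "dft N (\<lambda>j. y ((j + k) mod N)) i = zeta N ^ (k * i) * dft N y i" .
qed

lemma dft_modul:
  assumes "N > 0" and "[n + k = 0] (mod N)"
  shows "dft N (modul N n x) = (\<lambda>i. dft N x ((i + k) mod N))"
proof
  fix i
  let ?w = "inverse (zeta N)"
  have twiddle: "zeta N ^ (n * j) * ?w ^ (j * i) = ?w ^ (j * ((i + k) mod N))" for j
  proof -
    have "zeta N ^ ((n + k) * j) = zeta N ^ 0"
      using power_cong_root_of_unity[OF zeta_power_N[OF assms(1)]]
        cong_scalar_right[OF assms(2), of j] by simp
    then have "zeta N ^ (n * j) = ?w ^ (k * j)"
      by (simp add: power_add add_mult_distrib field_simps)
    then have "zeta N ^ (n * j) * ?w ^ (j * i) = ?w ^ (k * j) * ?w ^ (j * i)"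
      by simp
    also have "\<dots> = ?w ^ (j * (i + k))"
      by (simp add: power_add algebra_simps)
    also have "\<dots> = ?w ^ (j * ((i + k) mod N))"
      by (rule power_cong_root_of_unity[OF inverse_zeta_power_N[OF assms(1)]])
        (simp add: cong_def mod_mult_right_eq)
    finally show ?thesis .
  qed
  show "dft N (modul N n x) i = dft N x ((i + k) mod N)"
    unfolding dft_def modul_def
  proof (intro sum.cong refl)
    fix j
    show "zeta N ^ (n * j) * x j * ?w ^ (j * i) = x j * ?w ^ (j * ((i + k) mod N))"
      unfolding twiddle[of j, symmetric] by (simp only: ac_simps)
  qed
qed

lemma dft_phase: "dft N (phase N m x) = (\<lambda>i. zeta N ^ m * dft N x i)"
  unfolding dft_def phase_def by (simp add: sum_distrib_left mult.assoc)

lemma sqmod_mult_unimodular: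
  assumes "\<And>j. norm (c j) = 1"
  shows "sqmod (\<lambda>j. c j * x j) = sqmod x"
  unfolding sqmod_def by (simp add: norm_mult assms)

lemma bisp_rotate:
  assumes "N > 0" "i < N" "j < N"
  shows "bisp N (\<lambda>l. y ((l + k) mod N)) i j = bisp N y i j"
proof -
  let ?r = "(2 * N - i - j) mod N"
  have "(i + j + ?r) mod N = (i + j + (2 * N - i - j)) mod N"
    by (simp add: mod_add_right_eq)
  also have "i + j + (2 * N - i - j) = 2 * N" using assms by simp
  finally have "[i + j + ?r = 0] (mod N)"
    by (simp add: cong_def)
  then have "zeta N ^ (k * (i + j + ?r)) = zeta N ^ (k * 0)"
    by (intro power_cong_root_of_unity[OF zeta_power_N[OF assms(1)]] cong_scalar_left)
  then have phases: "zeta N ^ (k * i) * zeta N ^ (k * j) * zeta N ^ (k * ?r) = 1"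
    by (simp add: power_add add_mult_distrib2)
  have "bisp N (\<lambda>l. y ((l + k) mod N)) i j
      = (zeta N ^ (k * i) * zeta N ^ (k * j) * zeta N ^ (k * ?r)) * bisp N y i j"
    unfolding bisp_def dft_rotate[OF assms(1)] by (simp only: mult_ac)
  with phases show ?thesis by simp
qed

definition preserves_heis_bispectrum ::
    "nat \<Rightarrow> ((nat \<Rightarrow> complex) \<Rightarrow> (nat \<Rightarrow> complex)) \<Rightarrow> bool" where
  "preserves_heis_bispectrum N g \<longleftrightarrow>
    (\<forall>x. \<forall>i<N. \<forall>j<N. BM N (g x) i j = BM N x i j \<and> BFM N (g x) i j = BFM N x i j)"

lemma preserves_heis_bispectrum_id: "preserves_heis_bispectrum N id"
  unfolding preserves_heis_bispectrum_def by simp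

lemma preserves_heis_bispectrum_comp:
  "preserves_heis_bispectrum N f \<Longrightarrow> preserves_heis_bispectrum N g
    \<Longrightarrow> preserves_heis_bispectrum N (f \<circ> g)"
  unfolding preserves_heis_bispectrum_def by simp

lemma preserves_heis_bispectrum_transl:
  assumes "N > 0"
  shows "preserves_heis_bispectrum N (transl N k)"
proof -
  have "sqmod (transl N k x) = (\<lambda>l. sqmod x ((l + k) mod N))" for x
    unfolding sqmod_def transl_def ..
  moreover have "sqmod (dft N (transl N k x)) = sqmod (dft N x)" for x
    unfolding transl_def dft_rotate[OF assms] by (rule sqmod_mult_unimodular) simp
  ultimately show ?thesis
    unfolding preserves_heis_bispectrum_def BM_def BFM_def using bisp_rotate[OF assms] by simp
qed

lemma preserves_heis_bispectrum_modul:
  assumes "N > 0"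
  shows "preserves_heis_bispectrum N (modul N n)"
proof -
  obtain k where shift: "[n + k = 0] (mod N)"
  proof
    have "n + (N - 1) * n = N * n" using assms by (cases N) simp_all
    then show "[n + (N - 1) * n = 0] (mod N)" by (simp add: cong_def)
  qed
  have "sqmod (modul N n x) = sqmod x" for x
    unfolding modul_def by (rule sqmod_mult_unimodular) simp
  moreover have "sqmod (dft N (modul N n x))
      = (\<lambda>l. sqmod (dft N x) ((l + k) mod N))" for x
    unfolding dft_modul[OF assms shift] sqmod_def ..
  ultimately show ?thesis
    unfolding preserves_heis_bispectrum_def BM_def BFM_def using bisp_rotate[OF assms] by simp
qed

lemma preserves_heis_bispectrum_phase: "preserves_heis_bispectrum N (phase N m)"
proof -
  have "sqmod (phase N m x) = sqmod x" for x
    unfolding phase_def by (rule sqmod_mult_unimodular) simp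
  moreover have "sqmod (dft N (phase N m x)) = sqmod (dft N x)" for x
    unfolding dft_phase by (rule sqmod_mult_unimodular) simp
  ultimately show ?thesis
    unfolding preserves_heis_bispectrum_def BM_def BFM_def by simp
qed

lemma heis_ops_preserve_heis_bispectrum:
  assumes "N > 0" and "g \<in> heis_ops N"
  shows "preserves_heis_bispectrum N g"
  using assms(2)
proof (induction g rule: heis_ops.induct)
  case id_op
  show ?case by (rule preserves_heis_bispectrum_id)
next
  case (T_op g k)
  then show ?case
    by (intro preserves_heis_bispectrum_comp preserves_heis_bispectrum_transl assms(1))
next
  case (M_op g n)
  then show ?case
    by (intro preserves_heis_bispectrum_comp preserves_heis_bispectrum_modul assms(1))
next
  case (Z_op g m)
  then show ?case
    by (intro preserves_heis_bispectrum_comp preserves_heis_bispectrum_phase)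
qed

theorem theorem4p3:
  fixes N :: nat and g :: "(nat \<Rightarrow> complex) \<Rightarrow> (nat \<Rightarrow> complex)" and x :: "nat \<Rightarrow> complex"
  assumes "N \<ge> 2" and "g \<in> heis_ops N"
  shows "\<forall>i<N. \<forall>j<N. BM N (g x) i j = BM N x i j \<and> BFM N (g x) i j = BFM N x i j"
  using heis_ops_preserve_heis_bispectrum[OF _ assms(2)] assms(1)
  unfolding preserves_heis_bispectrum_def by simp

end
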